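(* Let $X$ be a locally compact Hausdorff space and $\zeta$ a quasi-integral on $X$. Then the set function $\tau_\zeta:\mathcal A(X)\to[0,\infty)$ defined by $$\tau_\zeta(K)=\inf\{\zeta(f)\mid f\in C_c(X),\ f\ge \mathbf 1_K\},\qquad \tau_\zeta(O)=\sup\{\zeta(f)\mid f\in C_c(X),\ f\le \mathbf 1_O\}$$ ($K\in\mathcal K(X)$, $O\in\mathcal O(X)$) is a topological measure on $X$.
   Context: $C_c(X)$: continuous real functions with compact support, uniform norm; $\mathbf 1_A$: indicator function. A quasi-integral on $X$ is a functional $\eta:C_c(X)\to\mathbb R$ such that: (i) $\eta(f)\le\eta(g)$ whenever $f\le g$; (ii) for every compact $K\subset X$ there is $N_K\ge0$ with $|\eta(f)-\eta(g)|\le N_K\|f-g\|$ for all $f,g$ supported in $K$; (iii) for every $f\in C_c(X)$, $\eta$ is linear on $\{\phi\circ f\mid \phi\in C(\mathbb R),\ \phi(0)=0\}$. $\mathcal K(X)$: compact subsets; $\mathcal O(X)$: open subsets with compact closure; $\mathcal A(X)=\mathcal K(X)\cup\mathcal O(X)$. A topological measure is $\tau:\mathcal A(X)\to[0,\infty)$ with: (additivity) $\tau(A\cup A')=\tau(A)+\tau(A')$ for disjoint $A,A'\in\mathcal A(X)$ with $A\cup A'\in\mathcal A(X)$; (monotonicity) $\tau(A)\le\tau(A')$ for $A\subset A'$; (regularity) $\tau(K)=\inf\{\tau(O)\mid O\in\mathcal O(X),O\supset K\}$ and $\tau(O)=\sup\{\tau(K)\mid K\in\mathcal K(X),K\subset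 O\}$. *)

theory Defs
  imports "HOL-Analysis.Analysis"
begin

definition tsupp :: "('a::topological_space \<Rightarrow> real) \<Rightarrow> 'a set" where
  "tsupp f = closure {x. f x \<noteq> 0}"

definition Cc :: "('a::topological_space \<Rightarrow> real) set" where
  "Cc = {f. continuous_on UNIV f \<and> compact (tsupp f)}"

definition unorm_dist :: "('a \<Rightarrow> real) \<Rightarrow> ('a \<Rightarrow> real) \<Rightarrow> real" where
  "unorm_dist f g = (SUP x. \<bar>f x - g x\<bar>)"

definition quasi_integral :: "(('a::topological_space \<Rightarrow> real) \<Rightarrow> real) \<Rightarrow> bool" where
  "quasi_integral \<eta> \<longleftrightarrow>
     (\<forall>f\<in>Cc. \<forall>g\<in>Cc. f \<le> g \<longrightarrow> \<eta> f \<le> \<eta> g) \<and>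
     (\<forall>K. compact K \<longrightarrow> (\<exists>N\<ge>0. \<forall>f\<in>Cc. \<forall>g\<in>Cc. tsupp f \<subseteq> K \<longrightarrow> tsupp g \<subseteq> K \<longrightarrow>
          \<bar>\<eta> f - \<eta> g\<bar> \<le> N * unorm_dist f g)) \<and>
     (\<forall>f\<in>Cc. \<forall>\<phi> \<psi> (a::real) (b::real).
          continuous_on UNIV \<phi> \<and> \<phi> 0 = 0 \<and> continuous_on UNIV \<psi> \<and> \<psi> 0 = 0 \<longrightarrow>
          \<eta> (\<lambda>x. a * \<phi> (f x) + b * \<psi> (f x)) = a * \<eta> (\<phi> \<circ> f) + b * \<eta> (\<psi> \<circ> f))"

definition OX :: "'a::topological_space set set" where
  "OX = {U. open U \<and> compact (closure U)}"

definition AX :: "'a::topological_space set set" where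
  "AX = {K. compact K} \<union> OX"

definition topological_measure :: "('a::topological_space set \<Rightarrow> real) \<Rightarrow> bool" where
  "topological_measure \<tau> \<longleftrightarrow>
     (\<forall>A\<in>AX. 0 \<le> \<tau> A) \<and>
     (\<forall>A\<in>AX. \<forall>A'\<in>AX. A \<inter> A' = {} \<longrightarrow> A \<union> A' \<in> AX \<longrightarrow> \<tau> (A \<union> A') = \<tau> A + \<tau> A') \<and>
     (\<forall>A\<in>AX. \<forall>A'\<in>AX. A \<subseteq> A' \<longrightarrow> \<tau> A \<le> \<tau> A') \<and>
     (\<forall>K. compact K \<longrightarrow> \<tau> K = Inf {\<tau> U | U. U \<in> OX \<and> K \<subseteq> U}) \<and>
     (\<forall>U\<in>OX. \<tau> U = Sup {\<tau> K | K. compact K \<and> K \<subseteq> U})"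

text \<open>The set function tau_zeta. On sets that are both compact and open the two
  formulas of the paper agree; we use the compact-set formula there.\<close>
definition tau_of :: "(('a::topological_space \<Rightarrow> real) \<Rightarrow> real) \<Rightarrow> 'a set \<Rightarrow> real" where
  "tau_of \<zeta> A = (if compact A then Inf {\<zeta> f | f. f \<in> Cc \<and> indicator A \<le> f}
                  else Sup {\<zeta> f | f. f \<in> Cc \<and> f \<le> indicator A})"

end

theory Submission
  imports Defs
begin

(* Write tau_inf and tau_sup for the infimum and the supremum formula, so that tau_zeta is tau_inf
  on compact sets and tau_sup on the other open sets (the two agree on compact open sets).
  Urysohn functions of the locally compact Hausdorff space give tau_inf K \<le> tau_sup U for compact
  K inside U, and cutting a function f at a level t > 0 shows that tau_sup is inner regular by
  tau_inf and tau_inf is outer regular by tau_sup.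
  Quasi-linearity only applies to functions of a single f. Two nonnegative functions with
  disjoint supports are the positive and negative part of their difference, which makes tau_inf
  additive on disjoint compact sets. The key estimate tau_inf M \<le> tau_inf K + tau_sup (W - K) for
  compact K \<subseteq> M \<subseteq> W comes from splitting a clamp of the single function g + min f g,
  where g is an Urysohn function of M in W and f dominates the indicator of K. Additivity for
  the mixed compact/open cases then follows from the regularity properties. *)

lemma compact_closed_subset: "compact S \<Longrightarrow> closed T \<Longrightarrow> T \<subseteq> S \<Longrightarrow> compact T"
  using compact_Int_closed[of S T] by (simp add: Int_absorb1)

lemma Hausdorff_space_euclidean_t2: "Hausdorff_space (euclidean :: 'a::t2_space topology)"
  unfolding Hausdorff_space_def disjnt_def by (simp add: separation_t2)

lemma nonzero_in_tsupp: "f x \<noteq> 0 \<Longrightarrow> x \<in> tsupp f"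
  unfolding tsupp_def using closure_subset[of "{x. f x \<noteq> 0}"] by blast

lemma indicator_le_iff:
  "indicator A \<le> (f :: 'a \<Rightarrow> real) \<longleftrightarrow> (\<forall>x. 0 \<le> f x) \<and> (\<forall>x\<in>A. 1 \<le> f x)"
  by (auto simp: le_fun_def indicator_def intro: order_trans[OF zero_le_one] split: if_splits)

lemma le_indicator_iff:
  "(f :: 'a \<Rightarrow> real) \<le> indicator A \<longleftrightarrow> (\<forall>x. f x \<le> 1) \<and> (\<forall>x. x \<notin> A \<longrightarrow> f x \<le> 0)"
  by (auto simp: le_fun_def indicator_def intro: order_trans[OF _ zero_le_one] split: if_splits)

lemma CcI:
  assumes "continuous_on UNIV f" "compact K" "\<And>x. f x \<noteq> 0 \<Longrightarrow> x \<in> K"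
  shows "f \<in> (Cc :: ('a::t2_space \<Rightarrow> real) set)"
proof -
  have "tsupp f \<subseteq> K"
    unfolding tsupp_def using assms(3) compact_imp_closed[OF assms(2)]
    by (intro closure_minimal) auto
  then have "compact (tsupp f)"
    by (rule compact_closed_subset[OF assms(2), rotated]) (simp add: tsupp_def)
  then show ?thesis using assms(1) by (simp add: Cc_def)
qed

lemma Cc_continuous: "f \<in> Cc \<Longrightarrow> continuous_on UNIV f"
  unfolding Cc_def by auto

lemma Cc_compact_tsupp: "f \<in> Cc \<Longrightarrow> compact (tsupp f)"
  unfolding Cc_def by auto

lemma Cc_zero: "(\<lambda>x. 0) \<in> (Cc :: ('a::t2_space \<Rightarrow> real) set)"
  by (rule CcI[where K = "{}"]) auto

lemma Cc_compose:
  assumes "f \<in> (Cc :: ('a::t2_space \<Rightarrow> real) set)" "continuous_on UNIV \<phi>" "\<phi> 0 = 0"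
  shows "(\<lambda>x. \<phi> (f x)) \<in> Cc"
proof (rule CcI[where K = "tsupp f"])
  show "continuous_on UNIV (\<lambda>x. \<phi> (f x))"
    using assms Cc_continuous continuous_on_compose2[of UNIV \<phi> UNIV f] by auto
  show "compact (tsupp f)" using assms(1) by (rule Cc_compact_tsupp)
  fix x assume "\<phi> (f x) \<noteq> 0"
  then have "f x \<noteq> 0" using assms(3) by auto
  then show "x \<in> tsupp f" by (rule nonzero_in_tsupp)
qed

lemma Cc_compose2:
  assumes "f \<in> (Cc :: ('a::t2_space \<Rightarrow> real) set)" "g \<in> Cc"
    and "continuous_on UNIV (\<lambda>p. \<phi> (fst p) (snd p))" "\<phi> 0 0 = 0"
  shows "(\<lambda>x. \<phi> (f x) (g x)) \<in> Cc"
proof (rule CcI[where K = "tsupp f \<union> tsupp g"])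
  have "continuous_on UNIV (\<lambda>x. (f x, g x))"
    using assms Cc_continuous by (intro continuous_intros) auto
  then show "continuous_on UNIV (\<lambda>x. \<phi> (f x) (g x))"
    using continuous_on_compose2[OF assms(3) \<open>continuous_on UNIV (\<lambda>x. (f x, g x))\<close>] by auto
  show "compact (tsupp f \<union> tsupp g)" using assms(1,2) Cc_compact_tsupp by auto
  fix x assume "\<phi> (f x) (g x) \<noteq> 0"
  then have "f x \<noteq> 0 \<or> g x \<noteq> 0" using assms(4) by auto
  then show "x \<in> tsupp f \<union> tsupp g" using nonzero_in_tsupp by blast
qed

lemma Cc_add: "f \<in> Cc \<Longrightarrow> g \<in> Cc \<Longrightarrow> (\<lambda>x. f x + g x) \<in> (Cc :: ('a::t2_space \<Rightarrow> real) set)"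
  by (rule Cc_compose2[where \<phi> = "(+)"])
    (simp_all add: continuous_on_add continuous_on_fst continuous_on_snd)

lemma Cc_diff: "f \<in> Cc \<Longrightarrow> g \<in> Cc \<Longrightarrow> (\<lambda>x. f x - g x) \<in> (Cc :: ('a::t2_space \<Rightarrow> real) set)"
  by (rule Cc_compose2[where \<phi> = "(-)"])
    (simp_all add: continuous_on_diff continuous_on_fst continuous_on_snd)

lemma Cc_min: "f \<in> Cc \<Longrightarrow> g \<in> Cc \<Longrightarrow> (\<lambda>x. min (f x) (g x)) \<in> (Cc :: ('a::t2_space \<Rightarrow> real) set)"
  by (rule Cc_compose2[where \<phi> = min])
    (simp_all add: continuous_on_min continuous_on_fst continuous_on_snd)

lemma Cc_cmult: "f \<in> Cc \<Longrightarrow> (\<lambda>x. c * f x) \<in> (Cc :: ('a::t2_space \<Rightarrow> real) set)"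
  by (rule Cc_compose[where \<phi> = "\<lambda>s. c * s"]) (simp_all add: continuous_on_mult_left)

lemma Cc_superlevel_compact:
  assumes "f \<in> Cc" "0 < s"
  shows "compact {x. s \<le> f x}"
proof (rule compact_closed_subset[OF Cc_compact_tsupp[OF assms(1)]])
  show "closed {x. s \<le> f x}"
    using Cc_continuous[OF assms(1)] by (intro closed_Collect_le continuous_intros) auto
  show "{x. s \<le> f x} \<subseteq> tsupp f" using assms(2) nonzero_in_tsupp[of f] by force
qed

lemma OX_strict_superlevel:
  assumes "f \<in> (Cc :: ('a::t2_space \<Rightarrow> real) set)" "0 < s"
  shows "{x. s < f x} \<in> OX"
proof -
  have "closure {x. s < f x} \<subseteq> {x. s \<le> f x}"
    using Cc_continuous[OF assms(1)]
    by (intro closure_minimal closed_Collect_le continuous_intros) auto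
  then have "compact (closure {x. s < f x})"
    by (rule compact_closed_subset[OF Cc_superlevel_compact[OF assms] closed_closure])
  moreover have "open {x. s < f x}"
    using Cc_continuous[OF assms(1)] by (intro open_Collect_less continuous_intros) auto
  ultimately show ?thesis by (simp add: OX_def)
qed

lemma OX_open_subset:
  assumes "W \<in> OX" "open U" "U \<subseteq> W"
  shows "U \<in> (OX :: 'a::t2_space set set)"
proof -
  have "compact (closure W)" using assms(1) by (simp add: OX_def)
  then have "compact (closure U)"
    using compact_closed_subset[of "closure W" "closure U"] closure_mono[OF assms(3)] by simp
  then show ?thesis using assms(2) by (simp add: OX_def)
qed

lemma OX_neighbourhood:
  fixes K :: "'a::t2_space set"
  assumes "locally_compact_space (euclidean :: 'a topology)" "compact K"
  obtains V where "V \<in> OX" "K \<subseteq> V"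
proof -
  obtain V L where "open V" "compact L" "K \<subseteq> V" "V \<subseteq> L"
    using assms locally_compact_space_compact_closed_compact[OF
        disjI1[OF Hausdorff_space_euclidean_t2]]
    by (metis compactin_euclidean_iff open_openin)
  then have "closure V \<subseteq> L" by (simp add: closure_minimal compact_imp_closed)
  then have "compact (closure V)" using compact_closed_subset[OF \<open>compact L\<close>] by simp
  then show thesis using that \<open>open V\<close> \<open>K \<subseteq> V\<close> by (simp add: OX_def)
qed

lemma Cc_urysohn:
  fixes K U :: "'a::t2_space set"
  assumes LC: "locally_compact_space (euclidean :: 'a topology)"
    and K: "compact K" and U: "open U" "K \<subseteq> U"
  obtains g :: "'a \<Rightarrow> real" where "g \<in> Cc" "\<And>x. 0 \<le> g x" "\<And>x. g x \<le> 1"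
    "\<And>x. x \<in> K \<Longrightarrow> g x = 1" "tsupp g \<subseteq> U"
proof -
  have H: "Hausdorff_space (euclidean :: 'a topology)" by (rule Hausdorff_space_euclidean_t2)
  obtain V0 where V0: "V0 \<in> OX" "K \<subseteq> V0" by (rule OX_neighbourhood[OF LC K])
  have "compact (closure V0 - U)" using V0 U by (auto simp: OX_def compact_diff)
  moreover have "disjnt K (closure V0 - U)" using U by (auto simp: disjnt_def)
  ultimately obtain A B where AB: "open A" "open B" "K \<subseteq> A" "closure V0 - U \<subseteq> B" "disjnt A B"
    using H K unfolding Hausdorff_space_compact_sets by (metis compactin_euclidean_iff open_openin)
  define V where "V = V0 \<inter> A"
  define L where "L = closure V0 - B"
  have "open V" "K \<subseteq> V" using V0 AB by (auto simp: V_def OX_def)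
  have "compact L" using V0 AB by (auto simp: L_def OX_def compact_diff)
  have "V \<subseteq> L" using AB closure_subset[of V0] by (auto simp: V_def L_def disjnt_def)
  have "L \<subseteq> U" using AB by (auto simp: L_def)
  have "completely_regular_space (euclidean :: 'a topology)"
    by (rule locally_compact_regular_imp_completely_regular_space[OF LC disjI1[OF H]])
  then obtain g where g: "continuous_map euclidean (top_of_set {0::real..1}) g"
      "g ` (- V) \<subseteq> {0}" "g ` K \<subseteq> {1}"
    using Urysohn_completely_regular_compact_closed[of 0 1 euclidean K "- V"]
      K \<open>open V\<close> \<open>K \<subseteq> V\<close>
    by (auto simp: disjnt_def closed_closedin[symmetric])
  have "continuous_on UNIV g" "\<And>x. g x \<in> {0..1}"
    using g(1) unfolding continuous_map_in_subtopology by auto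
  have gV: "\<And>x. g x \<noteq> 0 \<Longrightarrow> x \<in> V" using g(2) by auto
  have "g \<in> Cc"
  proof (rule CcI[OF \<open>continuous_on UNIV g\<close> \<open>compact L\<close>])
    show "x \<in> L" if "g x \<noteq> 0" for x using gV[OF that] \<open>V \<subseteq> L\<close> by blast
  qed
  have "tsupp g \<subseteq> L"
    unfolding tsupp_def using gV \<open>V \<subseteq> L\<close> compact_imp_closed[OF \<open>compact L\<close>]
    by (intro closure_minimal) auto
  show thesis
  proof (rule that[OF \<open>g \<in> Cc\<close>])
    show "0 \<le> g x" "g x \<le> 1" for x using \<open>g x \<in> {0..1}\<close> by auto
    show "g x = 1" if "x \<in> K" for x using g(3) that by blast
    show "tsupp g \<subseteq> U" using \<open>tsupp g \<subseteq> L\<close> \<open>L \<subseteq> U\<close> by blast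
  qed
qed

lemma Cc_indicator_majorant:
  fixes K :: "'a::t2_space set"
  assumes "locally_compact_space (euclidean :: 'a topology)" "compact K"
  obtains g :: "'a \<Rightarrow> real" where "g \<in> Cc" "indicator K \<le> g"
proof -
  obtain g :: "'a \<Rightarrow> real" where "g \<in> Cc" "\<And>x. 0 \<le> g x" "\<And>x. x \<in> K \<Longrightarrow> g x = 1"
    using Cc_urysohn[OF assms open_UNIV subset_UNIV] by metis
  then show thesis using that[of g] by (simp add: indicator_le_iff)
qed

lemma Cc_disjoint_urysohn:
  fixes K1 K2 :: "'a::t2_space set"
  assumes "locally_compact_space (euclidean :: 'a topology)"
    and "compact K1" "compact K2" "K1 \<inter> K2 = {}"
  obtains g1 g2 :: "'a \<Rightarrow> real" where "g1 \<in> Cc" "g2 \<in> Cc" "\<And>x. 0 \<le> g1 x" "\<And>x. 0 \<le> g2 x"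
    "\<And>x. x \<in> K1 \<Longrightarrow> g1 x = 1" "\<And>x. x \<in> K2 \<Longrightarrow> g2 x = 1" "\<And>x. g1 x = 0 \<or> g2 x = 0"
proof -
  obtain U1 U2 where U: "open U1" "open U2" "K1 \<subseteq> U1" "K2 \<subseteq> U2" "disjnt U1 U2"
    using Hausdorff_space_euclidean_t2 assms(2-4) unfolding Hausdorff_space_compact_sets
    by (metis compactin_euclidean_iff open_openin disjnt_def)
  obtain g1 :: "'a \<Rightarrow> real" where g1: "g1 \<in> Cc" "\<And>x. 0 \<le> g1 x"
      "\<And>x. x \<in> K1 \<Longrightarrow> g1 x = 1" "tsupp g1 \<subseteq> U1"
    using Cc_urysohn[OF assms(1,2) U(1,3)] by metis
  obtain g2 :: "'a \<Rightarrow> real" where g2: "g2 \<in> Cc" "\<And>x. 0 \<le> g2 x"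
      "\<And>x. x \<in> K2 \<Longrightarrow> g2 x = 1" "tsupp g2 \<subseteq> U2"
    using Cc_urysohn[OF assms(1,3) U(2,4)] by metis
  have "g1 x = 0 \<or> g2 x = 0" for x
    using nonzero_in_tsupp[of g1 x] nonzero_in_tsupp[of g2 x] g1(4) g2(4) U(5)
    by (auto simp: disjnt_def)
  with g1 g2 show thesis using that by blast
qed

lemma field_le_epsilon_scaled:
  fixes x y c :: real
  assumes "\<And>t. 0 < t \<Longrightarrow> x \<le> y + t * c" "0 \<le> c"
  shows "x \<le> y"
proof (rule field_le_epsilon)
  fix e :: real assume "0 < e"
  then have "x \<le> y + e / (c + 1) * c" using assms(2) by (intro assms(1)) simp
  moreover have "e / (c + 1) * c \<le> e"
    using \<open>0 < e\<close> assms(2) by (simp add: field_simps)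
  ultimately show "x \<le> y + e" by linarith
qed

definition tau_inf :: "(('a::topological_space \<Rightarrow> real) \<Rightarrow> real) \<Rightarrow> 'a set \<Rightarrow> real" where
  "tau_inf \<zeta> A = Inf {\<zeta> f | f. f \<in> Cc \<and> indicator A \<le> f}"

definition tau_sup :: "(('a::topological_space \<Rightarrow> real) \<Rightarrow> real) \<Rightarrow> 'a set \<Rightarrow> real" where
  "tau_sup \<zeta> A = Sup {\<zeta> f | f. f \<in> Cc \<and> f \<le> indicator A}"

lemma tau_of_compact: "compact A \<Longrightarrow> tau_of \<zeta> A = tau_inf \<zeta> A"
  by (simp add: tau_of_def tau_inf_def)

lemma tau_of_not_compact: "\<not> compact A \<Longrightarrow> tau_of \<zeta> A = tau_sup \<zeta> A"
  by (simp add: tau_of_def tau_sup_def)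

locale quasi_integral_functional =
  fixes \<zeta> :: "('a::t2_space \<Rightarrow> real) \<Rightarrow> real"
  assumes quasi_integral: "quasi_integral \<zeta>"
begin

lemma zeta_mono: "f \<in> Cc \<Longrightarrow> g \<in> Cc \<Longrightarrow> (\<And>x. f x \<le> g x) \<Longrightarrow> \<zeta> f \<le> \<zeta> g"
  using quasi_integral unfolding quasi_integral_def by (auto simp: le_fun_def)

lemma zeta_linear_compose:
  assumes "f \<in> Cc" "continuous_on UNIV \<phi>" "\<phi> 0 = 0" "continuous_on UNIV \<psi>" "\<psi> 0 = 0"
  shows "\<zeta> (\<lambda>x. a * \<phi> (f x) + b * \<psi> (f x)) = a * \<zeta> (\<lambda>x. \<phi> (f x)) + b * \<zeta> (\<lambda>x. \<psi> (f x))"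
proof -
  have "\<forall>f\<in>Cc. \<forall>\<phi> \<psi> (a::real) (b::real).
          continuous_on UNIV \<phi> \<and> \<phi> 0 = 0 \<and> continuous_on UNIV \<psi> \<and> \<psi> 0 = 0 \<longrightarrow>
          \<zeta> (\<lambda>x. a * \<phi> (f x) + b * \<psi> (f x)) = a * \<zeta> (\<phi> \<circ> f) + b * \<zeta> (\<psi> \<circ> f)"
    using quasi_integral unfolding quasi_integral_def by (elim conjE)
  then have "\<zeta> (\<lambda>x. a * \<phi> (f x) + b * \<psi> (f x)) = a * \<zeta> (\<phi> \<circ> f) + b * \<zeta> (\<psi> \<circ> f)"
    using assms by simp
  then show ?thesis by (simp add: o_def)
qed

lemma zeta_add_compose:
  assumes "f \<in> Cc" "continuous_on UNIV \<phi>" "\<phi> 0 = 0" "continuous_on UNIV \<psi>" "\<psi> 0 = 0"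
  shows "\<zeta> (\<lambda>x. \<phi> (f x) + \<psi> (f x)) = \<zeta> (\<lambda>x. \<phi> (f x)) + \<zeta> (\<lambda>x. \<psi> (f x))"
  using zeta_linear_compose[OF assms, of 1 1] by simp

lemma zeta_cmult: "f \<in> Cc \<Longrightarrow> \<zeta> (\<lambda>x. c * f x) = c * \<zeta> f"
  using zeta_linear_compose[of f "\<lambda>s. s" "\<lambda>s. s" c 0] by simp

lemma zeta_zero: "\<zeta> (\<lambda>x. 0) = 0"
  using zeta_cmult[OF Cc_zero, of 0] by simp

lemma zeta_nonneg: "f \<in> Cc \<Longrightarrow> (\<And>x. 0 \<le> f x) \<Longrightarrow> 0 \<le> \<zeta> f"
  using zeta_mono[OF Cc_zero, of f] zeta_zero by simp

lemma zeta_add_disjoint: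
  assumes u: "u \<in> Cc" "\<And>x. 0 \<le> u x" and v: "v \<in> Cc" "\<And>x. 0 \<le> v x"
    and disj: "\<And>x. u x = 0 \<or> v x = 0"
  shows "\<zeta> (\<lambda>x. u x + v x) = \<zeta> u + \<zeta> v"
proof -
  define h where "h = (\<lambda>x. u x - v x)"
  have parts: "max (h x) 0 = u x" "max (- h x) 0 = v x" for x
    using u(2)[of x] v(2)[of x] disj[of x] by (auto simp: h_def)
  have "\<zeta> (\<lambda>x. max (h x) 0 + max (- h x) 0) = \<zeta> (\<lambda>x. max (h x) 0) + \<zeta> (\<lambda>x. max (- h x) 0)"
    by (rule zeta_add_compose[OF Cc_diff[OF u(1) v(1), folded h_def]])
      (auto intro!: continuous_on_max continuous_on_minus continuous_on_id continuous_on_const)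
  then show ?thesis by (simp add: parts)
qed

lemma zeta_add_min_disjoint:
  assumes "f1 \<in> Cc" "f2 \<in> Cc" "g1 \<in> Cc" "g2 \<in> Cc"
    and "\<And>x. 0 \<le> f1 x" "\<And>x. 0 \<le> f2 x" "\<And>x. 0 \<le> g1 x" "\<And>x. 0 \<le> g2 x"
    and "\<And>x. g1 x = 0 \<or> g2 x = 0"
  shows "\<zeta> (\<lambda>x. min (f1 x) (g1 x) + min (f2 x) (g2 x))
      = \<zeta> (\<lambda>x. min (f1 x) (g1 x)) + \<zeta> (\<lambda>x. min (f2 x) (g2 x))"
proof (rule zeta_add_disjoint)
  show "(\<lambda>x. min (f1 x) (g1 x)) \<in> Cc" "(\<lambda>x. min (f2 x) (g2 x)) \<in> Cc"
    using assms(1-4) by (auto intro: Cc_min)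
  show "0 \<le> min (f1 x) (g1 x)" "0 \<le> min (f2 x) (g2 x)" for x
    using assms(5-8) by auto
  show "min (f1 x) (g1 x) = 0 \<or> min (f2 x) (g2 x) = 0" for x
    using assms(5-8)[of x] assms(9)[of x] by auto
qed

lemma tau_inf_le: "f \<in> Cc \<Longrightarrow> indicator A \<le> f \<Longrightarrow> tau_inf \<zeta> A \<le> \<zeta> f"
  unfolding tau_inf_def
  by (rule cInf_lower, blast, rule bdd_belowI[of _ 0])
    (auto simp: indicator_le_iff intro: zeta_nonneg)

lemma tau_sup_least:
  "(\<And>f. f \<in> Cc \<Longrightarrow> f \<le> indicator A \<Longrightarrow> \<zeta> f \<le> c) \<Longrightarrow> tau_sup \<zeta> A \<le> c"
  unfolding tau_sup_def
  by (rule cSup_least) (use Cc_zero in \<open>auto simp: le_indicator_iff\<close>)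

lemma tau_sup_superlevel_le:
  assumes "f \<in> Cc" "\<And>x. 0 \<le> f x" "0 \<le> c"
  shows "tau_sup \<zeta> {x. 1 < c * f x} \<le> c * \<zeta> f"
proof (rule tau_sup_least)
  fix g assume g: "g \<in> Cc" "g \<le> indicator {x. 1 < c * f x}"
  have "g x \<le> c * f x" for x
  proof -
    have "g x \<le> 1" "1 < c * f x \<or> g x \<le> 0" using g(2) unfolding le_indicator_iff by auto
    then show ?thesis using mult_nonneg_nonneg[OF assms(3) assms(2)[of x]] by linarith
  qed
  then have "\<zeta> g \<le> \<zeta> (\<lambda>x. c * f x)" by (rule zeta_mono[OF g(1) Cc_cmult[OF assms(1)]])
  then show "\<zeta> g \<le> c * \<zeta> f" by (simp add: zeta_cmult[OF assms(1)])
qed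

end

locale quasi_integral_lch =
  quasi_integral_functional \<zeta> for \<zeta> :: "('a::t2_space \<Rightarrow> real) \<Rightarrow> real" +
  assumes locally_compact: "locally_compact_space (euclidean :: 'a topology)"
begin

lemma tau_inf_greatest:
  assumes "compact K" "\<And>f. f \<in> Cc \<Longrightarrow> indicator K \<le> f \<Longrightarrow> c \<le> \<zeta> f"
  shows "c \<le> tau_inf \<zeta> K"
proof -
  obtain g :: "'a \<Rightarrow> real" where "g \<in> Cc" "indicator K \<le> g"
    by (rule Cc_indicator_majorant[OF locally_compact assms(1)])
  then show ?thesis unfolding tau_inf_def using assms(2) by (intro cInf_greatest) auto
qed

lemma tau_sup_ge:
  assumes "compact K" "A \<subseteq> K" "f \<in> Cc" "f \<le> indicator A"
  shows "\<zeta> f \<le> tau_sup \<zeta> A"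
proof -
  obtain g :: "'a \<Rightarrow> real" where g: "g \<in> Cc" "indicator K \<le> g"
    by (rule Cc_indicator_majorant[OF locally_compact assms(1)])
  have "\<zeta> h \<le> \<zeta> g" if "h \<in> Cc" "h \<le> indicator A" for h
  proof (rule zeta_mono[OF that(1) g(1)])
    have "h x \<le> 1" "x \<notin> A \<Longrightarrow> h x \<le> 0" "0 \<le> g x" "x \<in> K \<Longrightarrow> 1 \<le> g x" for x
      using that(2) g(2) unfolding le_indicator_iff indicator_le_iff by auto
    then show "h x \<le> g x" for x using assms(2) by (meson order_trans subsetD)
  qed
  then show ?thesis
    unfolding tau_sup_def using assms(3,4) by (intro cSup_upper bdd_aboveI[of _ "\<zeta> g"]) auto
qed

lemma tau_inf_nonneg: "compact K \<Longrightarrow> 0 \<le> tau_inf \<zeta> K"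
  by (rule tau_inf_greatest) (auto simp: indicator_le_iff intro: zeta_nonneg)

lemma tau_sup_nonneg: "compact K \<Longrightarrow> A \<subseteq> K \<Longrightarrow> 0 \<le> tau_sup \<zeta> A"
  using tau_sup_ge[OF _ _ Cc_zero] zeta_zero by (simp add: le_indicator_iff)

lemma tau_inf_mono:
  assumes "compact K'" "K \<subseteq> K'"
  shows "tau_inf \<zeta> K \<le> tau_inf \<zeta> K'"
proof (rule tau_inf_greatest[OF assms(1)])
  fix f assume "f \<in> Cc" "indicator K' \<le> f"
  moreover have "indicator K \<le> f"
    using \<open>indicator K' \<le> f\<close> assms(2) unfolding indicator_le_iff by blast
  ultimately show "tau_inf \<zeta> K \<le> \<zeta> f" by (intro tau_inf_le)
qed

lemma tau_sup_mono:
  assumes "U' \<in> OX" "U \<subseteq> U'"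
  shows "tau_sup \<zeta> U \<le> tau_sup \<zeta> U'"
proof (rule tau_sup_least)
  fix f assume "f \<in> Cc" "f \<le> indicator U"
  moreover have "f \<le> indicator U'"
    using \<open>f \<le> indicator U\<close> assms(2) unfolding le_indicator_iff by blast
  moreover have "compact (closure U')" using assms(1) by (simp add: OX_def)
  ultimately show "\<zeta> f \<le> tau_sup \<zeta> U'" using tau_sup_ge closure_subset[of U'] by blast
qed

lemma tau_inf_le_tau_sup:
  assumes "U \<in> OX" "compact K" "K \<subseteq> U"
  shows "tau_inf \<zeta> K \<le> tau_sup \<zeta> U"
proof -
  have "open U" "compact (closure U)" using assms(1) by (auto simp: OX_def)
  obtain g :: "'a \<Rightarrow> real" where g: "g \<in> Cc" "\<And>x. 0 \<le> g x" "\<And>x. g x \<le> 1"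
    "\<And>x. x \<in> K \<Longrightarrow> g x = 1" "tsupp g \<subseteq> U"
    by (rule Cc_urysohn[OF locally_compact assms(2) \<open>open U\<close> assms(3)]) blast
  have "indicator K \<le> g" using g(2,4) by (simp add: indicator_le_iff)
  moreover have "g x = 0" if "x \<notin> U" for x using that g(5) nonzero_in_tsupp[of g x] by blast
  then have "g \<le> indicator U" using g(3) unfolding le_indicator_iff by simp
  ultimately show ?thesis
    using tau_inf_le[OF g(1)] tau_sup_ge[OF \<open>compact (closure U)\<close> closure_subset g(1)]
    by (meson order_trans)
qed

lemma tau_sup_le_tau_inf:
  assumes "compact K" "U \<subseteq> K"
  shows "tau_sup \<zeta> U \<le> tau_inf \<zeta> K"
proof (rule tau_inf_greatest[OF assms(1)])
  fix g assume g: "g \<in> Cc" "indicator K \<le> g"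
  show "tau_sup \<zeta> U \<le> \<zeta> g"
  proof (rule tau_sup_least)
    fix f assume "f \<in> Cc" "f \<le> indicator U"
    moreover have "f x \<le> 1" "x \<notin> U \<Longrightarrow> f x \<le> 0" "0 \<le> g x" "x \<in> K \<Longrightarrow> 1 \<le> g x" for x
      using \<open>f \<le> indicator U\<close> g(2) unfolding le_indicator_iff indicator_le_iff by auto
    then have "f x \<le> g x" for x using assms(2) by (meson order_trans subsetD)
    ultimately show "\<zeta> f \<le> \<zeta> g" using zeta_mono g(1) by blast
  qed
qed

lemma tau_inf_eq_tau_sup_if_open:
  assumes "compact K" "open K"
  shows "tau_inf \<zeta> K = tau_sup \<zeta> K"
proof -
  have "continuous_on (K \<union> - K) (\<lambda>x. if x \<in> K then 1 else 0 :: real)"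
    using assms by (intro continuous_on_If) (auto simp: compact_imp_closed)
  then have "continuous_on UNIV (indicator K :: 'a \<Rightarrow> real)"
    by (simp add: indicator_def[abs_def] of_bool_def)
  then have "(indicator K :: 'a \<Rightarrow> real) \<in> Cc"
    by (rule CcI[OF _ assms(1)]) (simp add: indicator_def split: if_splits)
  then have "tau_inf \<zeta> K \<le> tau_sup \<zeta> K"
    using tau_inf_le[of "indicator K"] tau_sup_ge[OF assms(1) order_refl]
    by (meson order_refl order_trans)
  then show ?thesis using tau_sup_le_tau_inf[OF assms(1) order_refl] by linarith
qed

lemma tau_inf_Un_le:
  assumes K1: "compact K1" and K2: "compact K2" and disj: "K1 \<inter> K2 = {}"
  shows "tau_inf \<zeta> (K1 \<union> K2) \<le> tau_inf \<zeta> K1 + tau_inf \<zeta> K2"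
proof -
  obtain g1 g2 :: "'a \<Rightarrow> real" where g: "g1 \<in> Cc" "g2 \<in> Cc" "\<And>x. 0 \<le> g1 x" "\<And>x. 0 \<le> g2 x"
    "\<And>x. x \<in> K1 \<Longrightarrow> g1 x = 1" "\<And>x. x \<in> K2 \<Longrightarrow> g2 x = 1" "\<And>x. g1 x = 0 \<or> g2 x = 0"
    by (rule Cc_disjoint_urysohn[OF locally_compact K1 K2 disj]) blast
  have sum_le: "tau_inf \<zeta> (K1 \<union> K2) \<le> \<zeta> f1 + \<zeta> f2"
    if f1: "f1 \<in> Cc" "indicator K1 \<le> f1" and f2: "f2 \<in> Cc" "indicator K2 \<le> f2" for f1 f2
  proof -
    have cut: "(\<lambda>x. min (f1 x) (g1 x)) \<in> Cc" "(\<lambda>x. min (f2 x) (g2 x)) \<in> Cc"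
      using f1(1) f2(1) g(1,2) by (auto intro: Cc_min)
    have "indicator (K1 \<union> K2) \<le> (\<lambda>x. min (f1 x) (g1 x) + min (f2 x) (g2 x))"
      using f1(2) f2(2) g(3-6) unfolding indicator_le_iff by fastforce
    then have "tau_inf \<zeta> (K1 \<union> K2) \<le> \<zeta> (\<lambda>x. min (f1 x) (g1 x) + min (f2 x) (g2 x))"
      using Cc_add[OF cut] by (intro tau_inf_le)
    also have "\<dots> = \<zeta> (\<lambda>x. min (f1 x) (g1 x)) + \<zeta> (\<lambda>x. min (f2 x) (g2 x))"
      using f1 f2 g unfolding indicator_le_iff by (intro zeta_add_min_disjoint) auto
    also have "\<dots> \<le> \<zeta> f1 + \<zeta> f2"
      using cut by (intro add_mono zeta_mono f1(1) f2(1)) auto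
    finally show ?thesis .
  qed
  have "tau_inf \<zeta> (K1 \<union> K2) - \<zeta> f2 \<le> tau_inf \<zeta> K1" if "f2 \<in> Cc" "indicator K2 \<le> f2" for f2
    using sum_le[OF _ _ that] by (intro tau_inf_greatest[OF K1]) (simp add: algebra_simps)
  then have "tau_inf \<zeta> (K1 \<union> K2) - tau_inf \<zeta> K1 \<le> tau_inf \<zeta> K2"
    by (intro tau_inf_greatest[OF K2]) (simp add: algebra_simps)
  then show ?thesis by linarith
qed

lemma tau_inf_Un_ge:
  assumes K1: "compact K1" and K2: "compact K2" and disj: "K1 \<inter> K2 = {}"
  shows "tau_inf \<zeta> K1 + tau_inf \<zeta> K2 \<le> tau_inf \<zeta> (K1 \<union> K2)"
proof -
  obtain g1 g2 :: "'a \<Rightarrow> real" where g: "g1 \<in> Cc" "g2 \<in> Cc" "\<And>x. 0 \<le> g1 x" "\<And>x. 0 \<le> g2 x"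
    "\<And>x. x \<in> K1 \<Longrightarrow> g1 x = 1" "\<And>x. x \<in> K2 \<Longrightarrow> g2 x = 1" "\<And>x. g1 x = 0 \<or> g2 x = 0"
    by (rule Cc_disjoint_urysohn[OF locally_compact K1 K2 disj]) blast
  show ?thesis
  proof (rule tau_inf_greatest)
    show "compact (K1 \<union> K2)" using K1 K2 by blast
    fix f assume f: "f \<in> Cc" "indicator (K1 \<union> K2) \<le> f"
    then have f0: "\<And>x. 0 \<le> f x" by (simp add: indicator_le_iff)
    have cut: "(\<lambda>x. min (f x) (g1 x)) \<in> Cc" "(\<lambda>x. min (f x) (g2 x)) \<in> Cc"
      using f(1) g(1,2) by (auto intro: Cc_min)
    have "tau_inf \<zeta> K1 + tau_inf \<zeta> K2
        \<le> \<zeta> (\<lambda>x. min (f x) (g1 x)) + \<zeta> (\<lambda>x. min (f x) (g2 x))"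
      using f g(3-6) cut unfolding indicator_le_iff
      by (intro add_mono tau_inf_le) (auto simp: indicator_le_iff)
    also have "\<dots> = \<zeta> (\<lambda>x. min (f x) (g1 x) + min (f x) (g2 x))"
      using f(1) g f0 by (intro zeta_add_min_disjoint[symmetric]) auto
    also have "\<dots> \<le> \<zeta> f"
    proof (rule zeta_mono[OF Cc_add[OF cut] f(1)])
      show "min (f x) (g1 x) + min (f x) (g2 x) \<le> f x" for x
        using f0[of x] g(7)[of x] by auto
    qed
    finally show "tau_inf \<zeta> K1 + tau_inf \<zeta> K2 \<le> \<zeta> f" .
  qed
qed

lemma tau_inf_Un_disjoint:
  "compact K1 \<Longrightarrow> compact K2 \<Longrightarrow> K1 \<inter> K2 = {} \<Longrightarrow>
    tau_inf \<zeta> (K1 \<union> K2) = tau_inf \<zeta> K1 + tau_inf \<zeta> K2"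
  using tau_inf_Un_le tau_inf_Un_ge by (simp add: antisym)

lemma zeta_le_tau_inf_superlevel:
  assumes f: "f \<in> Cc" "\<And>x. f x \<le> 1" and e: "e \<in> Cc" "indicator (tsupp f) \<le> e" and t: "0 < t"
  shows "\<zeta> f \<le> tau_inf \<zeta> {x. t \<le> f x} + t * \<zeta> e"
proof -
  define p where "p = (\<lambda>s::real. max (s - t) 0)"
  define q where "q = (\<lambda>s::real. min (max s 0) t)"
  have p: "continuous_on UNIV p" "p 0 = 0" and q: "continuous_on UNIV q" "q 0 = 0"
    using t unfolding p_def q_def
    by (auto intro!: continuous_on_max continuous_on_min continuous_on_diff continuous_on_id
        continuous_on_const)
  have pf: "(\<lambda>x. p (f x)) \<in> Cc" and qf: "(\<lambda>x. q (f x)) \<in> Cc"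
    using Cc_compose[OF f(1) p] Cc_compose[OF f(1) q] by auto
  have "\<zeta> f \<le> \<zeta> (\<lambda>x. p (f x) + q (f x))"
    using t by (intro zeta_mono f(1) Cc_add pf qf) (auto simp: p_def q_def)
  also have "\<dots> = \<zeta> (\<lambda>x. p (f x)) + \<zeta> (\<lambda>x. q (f x))"
    by (rule zeta_add_compose[OF f(1) p q])
  finally have split: "\<zeta> f \<le> \<zeta> (\<lambda>x. p (f x)) + \<zeta> (\<lambda>x. q (f x))" .
  have "\<zeta> (\<lambda>x. p (f x)) \<le> tau_inf \<zeta> {x. t \<le> f x}"
  proof (rule tau_inf_greatest[OF Cc_superlevel_compact[OF f(1) t]])
    fix g assume g: "g \<in> Cc" "indicator {x. t \<le> f x} \<le> g"
    have "p (f x) \<le> g x" for x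
      using g(2) f(2)[of x] t unfolding indicator_le_iff by (cases "t \<le> f x") (auto simp: p_def)
    then show "\<zeta> (\<lambda>x. p (f x)) \<le> \<zeta> g" by (rule zeta_mono[OF pf g(1)])
  qed
  moreover have "\<zeta> (\<lambda>x. q (f x)) \<le> \<zeta> (\<lambda>x. t * e x)"
  proof (rule zeta_mono[OF qf Cc_cmult[OF e(1)]])
    fix x
    have "0 \<le> e x" "f x \<noteq> 0 \<Longrightarrow> 1 \<le> e x"
      using e(2) nonzero_in_tsupp[of f x] unfolding indicator_le_iff by auto
    then show "q (f x) \<le> t * e x"
    proof (cases "f x = 0")
      case False
      have "q (f x) \<le> t" by (simp add: q_def)
      also have "\<dots> \<le> t * e x"
        using t \<open>f x \<noteq> 0 \<Longrightarrow> 1 \<le> e x\<close>[OF False] mult_left_mono[of 1 "e x" t] by simp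
      finally show ?thesis .
    qed (use t in \<open>simp add: q_def\<close>)
  qed
  ultimately show ?thesis using split zeta_cmult[OF e(1)] by simp
qed

lemma tau_sup_inner_regular:
  assumes U: "U \<in> OX"
  shows "tau_sup \<zeta> U = Sup {tau_inf \<zeta> K | K. compact K \<and> K \<subseteq> U}"
proof (rule antisym)
  let ?S = "{tau_inf \<zeta> K | K. compact K \<and> K \<subseteq> U}"
  have bdd: "bdd_above ?S"
    using tau_inf_le_tau_sup[OF U] by (intro bdd_aboveI[of _ "tau_sup \<zeta> U"]) auto
  show "tau_sup \<zeta> U \<le> Sup ?S"
  proof (rule tau_sup_least)
    fix f assume f: "f \<in> Cc" "f \<le> indicator U"
    obtain e :: "'a \<Rightarrow> real" where e: "e \<in> Cc" "indicator (tsupp f) \<le> e"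
      by (rule Cc_indicator_majorant[OF locally_compact Cc_compact_tsupp[OF f(1)]])
    have "\<zeta> f \<le> Sup ?S + t * \<zeta> e" if t: "0 < t" for t
    proof -
      have "{x. t \<le> f x} \<subseteq> U" using f(2) t unfolding le_indicator_iff by force
      then have "tau_inf \<zeta> {x. t \<le> f x} \<le> Sup ?S"
        using Cc_superlevel_compact[OF f(1) t] by (intro cSup_upper[OF _ bdd]) blast
      then show ?thesis
        using zeta_le_tau_inf_superlevel[OF f(1) _ e t] f(2) unfolding le_indicator_iff by simp
    qed
    moreover have "0 \<le> \<zeta> e" using e unfolding indicator_le_iff by (intro zeta_nonneg) auto
    ultimately show "\<zeta> f \<le> Sup ?S" by (rule field_le_epsilon_scaled)
  qed
  show "Sup ?S \<le> tau_sup \<zeta> U"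
    using tau_inf_le_tau_sup[OF U] by (intro cSup_least) auto
qed

lemma tau_sup_le_by_inner:
  assumes "U \<in> OX" "\<And>K. compact K \<Longrightarrow> K \<subseteq> U \<Longrightarrow> tau_inf \<zeta> K \<le> c"
  shows "tau_sup \<zeta> U \<le> c"
  unfolding tau_sup_inner_regular[OF assms(1)] using assms(2) by (intro cSup_least) auto

lemma tau_inf_outer_regular:
  assumes K: "compact K"
  shows "tau_inf \<zeta> K = Inf {tau_sup \<zeta> U | U. U \<in> OX \<and> K \<subseteq> U}"
proof (rule antisym)
  let ?T = "{tau_sup \<zeta> U | U. U \<in> OX \<and> K \<subseteq> U}"
  have bdd: "bdd_below ?T"
    using tau_inf_le_tau_sup[OF _ K] by (intro bdd_belowI[of _ "tau_inf \<zeta> K"]) auto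
  obtain V where "V \<in> OX" "K \<subseteq> V" by (rule OX_neighbourhood[OF locally_compact K])
  then show "tau_inf \<zeta> K \<le> Inf ?T"
    using tau_inf_le_tau_sup[OF _ K] by (intro cInf_greatest) auto
  show "Inf ?T \<le> tau_inf \<zeta> K"
  proof (rule tau_inf_greatest[OF K])
    fix f assume f: "f \<in> Cc" "indicator K \<le> f"
    then have f0: "\<And>x. 0 \<le> f x" by (simp add: indicator_le_iff)
    have "Inf ?T \<le> \<zeta> f + t * \<zeta> f" if t: "0 < t" for t
    proof -
      have U: "{x. 1 < (1 + t) * f x} = {x. 1 / (1 + t) < f x}"
        using t by (auto simp: field_simps)
      have "{x. 1 < (1 + t) * f x} \<in> OX"
        unfolding U using t by (intro OX_strict_superlevel f(1)) simp
      moreover have "K \<subseteq> {x. 1 < (1 + t) * f x}"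
        using f(2) t unfolding indicator_le_iff by (auto intro: less_le_trans[of 1 "1 + t"])
      ultimately have "Inf ?T \<le> tau_sup \<zeta> {x. 1 < (1 + t) * f x}"
        by (intro cInf_lower[OF _ bdd]) blast
      also have "\<dots> \<le> (1 + t) * \<zeta> f"
        using t by (intro tau_sup_superlevel_le f(1) f0) simp
      finally show ?thesis by (simp add: algebra_simps)
    qed
    moreover have "0 \<le> \<zeta> f" by (rule zeta_nonneg[OF f(1) f0])
    ultimately show "Inf ?T \<le> \<zeta> f" by (rule field_le_epsilon_scaled)
  qed
qed

lemma tau_sup_Un_disjoint:
  assumes U1: "open U1" and U2: "open U2" and disj: "U1 \<inter> U2 = {}" and W: "U1 \<union> U2 \<in> OX"
  shows "tau_sup \<zeta> (U1 \<union> U2) = tau_sup \<zeta> U1 + tau_sup \<zeta> U2"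
proof (rule antisym)
  have O1: "U1 \<in> OX" and O2: "U2 \<in> OX" using OX_open_subset[OF W] U1 U2 by auto
  show "tau_sup \<zeta> (U1 \<union> U2) \<le> tau_sup \<zeta> U1 + tau_sup \<zeta> U2"
  proof (rule tau_sup_le_by_inner[OF W])
    fix M assume M: "compact M" "M \<subseteq> U1 \<union> U2"
    have "compact (M - U2)" "compact (M - U1)" using M(1) U1 U2 by (auto intro: compact_diff)
    then have "tau_inf \<zeta> ((M - U2) \<union> (M - U1)) = tau_inf \<zeta> (M - U2) + tau_inf \<zeta> (M - U1)"
      using M(2) by (intro tau_inf_Un_disjoint) auto
    moreover have "(M - U2) \<union> (M - U1) = M" using M(2) disj by blast
    ultimately have "tau_inf \<zeta> M = tau_inf \<zeta> (M - U2) + tau_inf \<zeta> (M - U1)" by simp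
    moreover have "tau_inf \<zeta> (M - U2) \<le> tau_sup \<zeta> U1" "tau_inf \<zeta> (M - U1) \<le> tau_sup \<zeta> U2"
      using M(2) \<open>compact (M - U2)\<close> \<open>compact (M - U1)\<close>
      by (auto intro!: tau_inf_le_tau_sup O1 O2)
    ultimately show "tau_inf \<zeta> M \<le> tau_sup \<zeta> U1 + tau_sup \<zeta> U2" by linarith
  qed
  have "tau_sup \<zeta> U1 \<le> tau_sup \<zeta> (U1 \<union> U2) - tau_sup \<zeta> U2"
  proof (rule tau_sup_le_by_inner[OF O1])
    fix L1 assume L1: "compact L1" "L1 \<subseteq> U1"
    have "tau_sup \<zeta> U2 \<le> tau_sup \<zeta> (U1 \<union> U2) - tau_inf \<zeta> L1"
    proof (rule tau_sup_le_by_inner[OF O2])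
      fix L2 assume L2: "compact L2" "L2 \<subseteq> U2"
      have "tau_inf \<zeta> L1 + tau_inf \<zeta> L2 = tau_inf \<zeta> (L1 \<union> L2)"
        using L1 L2 disj by (intro tau_inf_Un_disjoint[symmetric]) auto
      also have "\<dots> \<le> tau_sup \<zeta> (U1 \<union> U2)"
        using L1 L2 by (intro tau_inf_le_tau_sup W) auto
      finally show "tau_inf \<zeta> L2 \<le> tau_sup \<zeta> (U1 \<union> U2) - tau_inf \<zeta> L1" by linarith
    qed
    then show "tau_inf \<zeta> L1 \<le> tau_sup \<zeta> (U1 \<union> U2) - tau_sup \<zeta> U2" by linarith
  qed
  then show "tau_sup \<zeta> U1 + tau_sup \<zeta> U2 \<le> tau_sup \<zeta> (U1 \<union> U2)" by linarith
qed

lemma tau_inf_le_by_two_level_function: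
  assumes k: "k \<in> Cc" "\<And>x. x \<in> M \<Longrightarrow> 1 \<le> k x" "\<And>x. x \<in> K \<Longrightarrow> 2 \<le> k x" "\<And>x. x \<notin> W \<Longrightarrow> k x \<le> 0"
    and f: "f \<in> Cc" "\<And>x. 0 \<le> f x" "\<And>x. k x \<le> 1 + f x"
    and D: "compact D" "W \<subseteq> D" and t: "0 < t"
  shows "tau_inf \<zeta> M \<le> (1 + t) * \<zeta> f + tau_sup \<zeta> (W - K)"
proof -
  define d where "d = t / (1 + t)"
  have d: "0 < d" "d < 1" "1 - d = 1 / (1 + t)" using t by (auto simp: d_def field_simps)
  define a where "a = (\<lambda>s::real. min (max s 0) 1)"
  define b where "b = (\<lambda>s. a ((s - (2 - d)) / d))"
  (* The clamp a \<circ> k dominates the indicator of M. Quasi-linearity splits it into b \<circ> k, which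
    lives where k > 2 - d and hence f > 1 - d, and a \<circ> k - b \<circ> k, which vanishes off W - K. *)
  have a: "continuous_on UNIV a" "a 0 = 0" unfolding a_def by (auto intro!: continuous_intros)
  have b: "continuous_on UNIV b" "b 0 = 0"
    using d unfolding b_def a_def by (auto intro!: continuous_intros simp: divide_simps)
  have c: "continuous_on UNIV (\<lambda>s. a s - b s)" "a 0 - b 0 = 0"
    using a b by (auto intro: continuous_on_diff)
  have ak: "(\<lambda>x. a (k x)) \<in> Cc" and bk: "(\<lambda>x. b (k x)) \<in> Cc" and ck: "(\<lambda>x. a (k x) - b (k x)) \<in> Cc"
    using Cc_compose[OF k(1) a] Cc_compose[OF k(1) b] Cc_compose[OF k(1) c] by auto
  have "indicator M \<le> (\<lambda>x. a (k x))"
    using k(2) unfolding indicator_le_iff a_def by (auto simp: le_max_iff_disj)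
  then have "tau_inf \<zeta> M \<le> \<zeta> (\<lambda>x. b (k x) + (a (k x) - b (k x)))"
    using tau_inf_le[OF ak] by simp
  also have "\<dots> = \<zeta> (\<lambda>x. b (k x)) + \<zeta> (\<lambda>x. a (k x) - b (k x))"
    by (rule zeta_add_compose[OF k(1) b c])
  also have "\<zeta> (\<lambda>x. b (k x)) \<le> \<zeta> (\<lambda>x. (1 + t) * f x)"
  proof (rule zeta_mono[OF bk Cc_cmult[OF f(1)]])
    fix x
    show "b (k x) \<le> (1 + t) * f x"
    proof (cases "k x \<le> 2 - d")
      case True
      then have "b (k x) = 0" using d unfolding b_def a_def by (simp add: divide_nonpos_pos)
      then show ?thesis using f(2)[of x] t by simp
    next
      case False
      then have "1 / (1 + t) < f x" using f(3)[of x] d(3) by linarith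
      then have "1 < (1 + t) * f x" using t by (simp add: field_simps)
      moreover have "b (k x) \<le> 1" unfolding b_def a_def by simp
      ultimately show ?thesis by linarith
    qed
  qed
  also have "\<zeta> (\<lambda>x. a (k x) - b (k x)) \<le> tau_sup \<zeta> (W - K)"
  proof (rule tau_sup_ge[OF D(1) _ ck])
    show "W - K \<subseteq> D" using D(2) by blast
    have "a (k x) - b (k x) \<le> 0" if "x \<notin> W \<or> x \<in> K" for x
      using that k(3,4)[of x] d(1,2) unfolding b_def a_def by (auto simp: field_simps)
    then show "(\<lambda>x. a (k x) - b (k x)) \<le> indicator (W - K)"
      unfolding le_indicator_iff a_def b_def by auto
  qed
  finally show ?thesis by (simp add: zeta_cmult[OF f(1)])
qed

lemma tau_inf_le_tau_inf_add_tau_sup_diff: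
  assumes K: "compact K" and M: "compact M" "K \<subseteq> M" and W: "W \<in> OX" "M \<subseteq> W"
  shows "tau_inf \<zeta> M \<le> tau_inf \<zeta> K + tau_sup \<zeta> (W - K)"
proof -
  have "open W" "compact (closure W)" using W(1) by (auto simp: OX_def)
  obtain g :: "'a \<Rightarrow> real" where g: "g \<in> Cc" "\<And>x. 0 \<le> g x" "\<And>x. g x \<le> 1"
    "\<And>x. x \<in> M \<Longrightarrow> g x = 1" "tsupp g \<subseteq> W"
    by (rule Cc_urysohn[OF locally_compact M(1) \<open>open W\<close> W(2)]) blast
  have "tau_inf \<zeta> M - tau_sup \<zeta> (W - K) \<le> \<zeta> f" if f: "f \<in> Cc" "indicator K \<le> f" for f
  proof -
    have f0: "\<And>x. 0 \<le> f x" and f1: "\<And>x. x \<in> K \<Longrightarrow> 1 \<le> f x"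
      using f(2) by (auto simp: indicator_le_iff)
    define k where "k = (\<lambda>x. g x + min (f x) (g x))"
    have "k \<in> Cc" unfolding k_def by (intro Cc_add Cc_min g(1) f(1))
    moreover have "1 \<le> k x" if "x \<in> M" for x using that g(4) f0 by (simp add: k_def)
    moreover have "2 \<le> k x" if "x \<in> K" for x using that M g(4) f1 by (force simp: k_def)
    moreover have "k x \<le> 0" if "x \<notin> W" for x
    proof -
      have "g x = 0" using that g(5) nonzero_in_tsupp[of g x] by blast
      then show ?thesis using f0[of x] by (simp add: k_def)
    qed
    moreover have "k x \<le> 1 + f x" for x using g(3)[of x] by (auto simp: k_def min_def)
    ultimately have "tau_inf \<zeta> M - tau_sup \<zeta> (W - K) \<le> \<zeta> f + t * \<zeta> f" if "0 < t" for t
      using tau_inf_le_by_two_level_function[OF _ _ _ _ f(1) f0 _ \<open>compact (closure W)\<close>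
          closure_subset that]
      by (simp add: algebra_simps)
    then show ?thesis by (rule field_le_epsilon_scaled[OF _ zeta_nonneg[OF f(1) f0]])
  qed
  then have "tau_inf \<zeta> M - tau_sup \<zeta> (W - K) \<le> tau_inf \<zeta> K" by (rule tau_inf_greatest[OF K])
  then show ?thesis by linarith
qed

lemma tau_sup_Un_compact:
  assumes K: "compact K" and U: "open U" and disj: "K \<inter> U = {}" and W: "K \<union> U \<in> OX"
  shows "tau_sup \<zeta> (K \<union> U) = tau_inf \<zeta> K + tau_sup \<zeta> U"
proof (rule antisym)
  have OU: "U \<in> OX" using OX_open_subset[OF W U] by blast
  show "tau_sup \<zeta> (K \<union> U) \<le> tau_inf \<zeta> K + tau_sup \<zeta> U"
  proof (rule tau_sup_le_by_inner[OF W])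
    fix M assume M: "compact M" "M \<subseteq> K \<union> U"
    have "tau_inf \<zeta> M \<le> tau_inf \<zeta> (M \<union> K)" using M(1) K by (intro tau_inf_mono) auto
    also have "\<dots> \<le> tau_inf \<zeta> K + tau_sup \<zeta> ((K \<union> U) - K)"
      using M K by (intro tau_inf_le_tau_inf_add_tau_sup_diff W) auto
    also have "(K \<union> U) - K = U" using disj by blast
    finally show "tau_inf \<zeta> M \<le> tau_inf \<zeta> K + tau_sup \<zeta> U" .
  qed
  have "tau_sup \<zeta> U \<le> tau_sup \<zeta> (K \<union> U) - tau_inf \<zeta> K"
  proof (rule tau_sup_le_by_inner[OF OU])
    fix L assume L: "compact L" "L \<subseteq> U"
    have "tau_inf \<zeta> K + tau_inf \<zeta> L = tau_inf \<zeta> (K \<union> L)"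
      using K L disj by (intro tau_inf_Un_disjoint[symmetric]) auto
    also have "\<dots> \<le> tau_sup \<zeta> (K \<union> U)"
      using K L by (intro tau_inf_le_tau_sup W) auto
    finally show "tau_inf \<zeta> L \<le> tau_sup \<zeta> (K \<union> U) - tau_inf \<zeta> K" by linarith
  qed
  then show "tau_inf \<zeta> K + tau_sup \<zeta> U \<le> tau_sup \<zeta> (K \<union> U)" by linarith
qed

lemma tau_inf_outer_approx:
  assumes "compact K" "0 < e"
  obtains W where "W \<in> OX" "K \<subseteq> W" "tau_sup \<zeta> W < tau_inf \<zeta> K + e"
proof -
  obtain V where "V \<in> OX" "K \<subseteq> V" by (rule OX_neighbourhood[OF locally_compact assms(1)])
  then have "{tau_sup \<zeta> U | U. U \<in> OX \<and> K \<subseteq> U} \<noteq> {}" by blast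
  moreover have "Inf {tau_sup \<zeta> U | U. U \<in> OX \<and> K \<subseteq> U} < tau_inf \<zeta> K + e"
    using tau_inf_outer_regular[OF assms(1)] assms(2) by simp
  ultimately obtain r where "r \<in> {tau_sup \<zeta> U | U. U \<in> OX \<and> K \<subseteq> U}" "r < tau_inf \<zeta> K + e"
    by (rule cInf_lessD[elim_format]) blast
  then show thesis using that by blast
qed

lemma tau_inf_Un_open_le:
  assumes K: "compact K" and U: "U \<in> OX" and disj: "K \<inter> U = {}" and C: "compact (K \<union> U)"
  shows "tau_inf \<zeta> (K \<union> U) \<le> tau_inf \<zeta> K + tau_sup \<zeta> U"
proof (rule field_le_epsilon)
  fix e :: real assume "0 < e"
  have "open U" using U by (simp add: OX_def)
  obtain W where W: "W \<in> OX" "K \<union> U \<subseteq> W" "tau_sup \<zeta> W < tau_inf \<zeta> (K \<union> U) + e"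
    by (rule tau_inf_outer_approx[OF C \<open>0 < e\<close>])
  define R where "R = W - (K \<union> U)"
  have "open R" "open W" using W(1) compact_imp_closed[OF C] by (auto simp: R_def OX_def)
  have "W = (K \<union> U) \<union> R" "W - K = U \<union> R" using W(2) disj by (auto simp: R_def)
  then have "tau_sup \<zeta> W = tau_inf \<zeta> (K \<union> U) + tau_sup \<zeta> R"
    using tau_sup_Un_compact[OF C \<open>open R\<close>] W(1) by (simp add: R_def)
  then have small: "tau_sup \<zeta> R < e" using W(3) by linarith
  have "tau_inf \<zeta> (K \<union> U) \<le> tau_inf \<zeta> K + tau_sup \<zeta> (W - K)"
    using K C W(1,2) by (intro tau_inf_le_tau_inf_add_tau_sup_diff) auto
  also have "tau_sup \<zeta> (W - K) = tau_sup \<zeta> U + tau_sup \<zeta> R"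
  proof -
    have "U \<inter> R = {}" by (auto simp: R_def)
    moreover have "U \<union> R \<in> OX"
      using OX_open_subset[OF W(1)] \<open>open U\<close> \<open>open R\<close> \<open>W - K = U \<union> R\<close> by blast
    ultimately show ?thesis
      using tau_sup_Un_disjoint[OF \<open>open U\<close> \<open>open R\<close>] \<open>W - K = U \<union> R\<close> by simp
  qed
  finally show "tau_inf \<zeta> (K \<union> U) \<le> tau_inf \<zeta> K + tau_sup \<zeta> U + e" using small by linarith
qed

lemma tau_inf_Un_open:
  assumes K: "compact K" and U: "U \<in> OX" and disj: "K \<inter> U = {}" and C: "compact (K \<union> U)"
  shows "tau_inf \<zeta> (K \<union> U) = tau_inf \<zeta> K + tau_sup \<zeta> U"
proof (rule antisym)
  show "tau_inf \<zeta> (K \<union> U) \<le> tau_inf \<zeta> K + tau_sup \<zeta> U"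
    by (rule tau_inf_Un_open_le[OF K U disj C])
  have "tau_sup \<zeta> U \<le> tau_inf \<zeta> (K \<union> U) - tau_inf \<zeta> K"
  proof (rule tau_sup_le_by_inner[OF U])
    fix L assume L: "compact L" "L \<subseteq> U"
    have "tau_inf \<zeta> K + tau_inf \<zeta> L = tau_inf \<zeta> (K \<union> L)"
      using K L disj by (intro tau_inf_Un_disjoint[symmetric]) auto
    also have "\<dots> \<le> tau_inf \<zeta> (K \<union> U)" using C L by (intro tau_inf_mono) auto
    finally show "tau_inf \<zeta> L \<le> tau_inf \<zeta> (K \<union> U) - tau_inf \<zeta> K" by linarith
  qed
  then show "tau_inf \<zeta> K + tau_sup \<zeta> U \<le> tau_inf \<zeta> (K \<union> U)" by linarith
qed

lemma tau_of_OX: "A \<in> OX \<Longrightarrow> tau_of \<zeta> A = tau_sup \<zeta> A"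
  by (cases "compact A")
    (simp_all add: tau_of_compact tau_of_not_compact tau_inf_eq_tau_sup_if_open OX_def)

lemma tau_of_nonneg:
  assumes "A \<in> AX"
  shows "0 \<le> tau_of \<zeta> A"
proof (cases "compact A")
  case True
  then show ?thesis by (simp add: tau_of_compact tau_inf_nonneg)
next
  case False
  then have "A \<in> OX" using assms by (simp add: AX_def)
  then show ?thesis using tau_sup_nonneg[OF _ closure_subset] by (simp add: tau_of_OX OX_def)
qed

lemma tau_of_Un_compact:
  assumes A: "compact A" and A': "A' \<in> AX" and disj: "A \<inter> A' = {}" and Un: "A \<union> A' \<in> AX"
  shows "tau_of \<zeta> (A \<union> A') = tau_of \<zeta> A + tau_of \<zeta> A'"
proof (cases "compact A'")
  case True
  then show ?thesis using A disj by (simp add: tau_of_compact compact_Un tau_inf_Un_disjoint)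
next
  case False
  then have O: "A' \<in> OX" "open A'" using A' by (auto simp: AX_def OX_def)
  from Un consider "compact (A \<union> A')" | "A \<union> A' \<in> OX" unfolding AX_def by blast
  then show ?thesis
  proof cases
    case 1
    then show ?thesis using A O disj by (simp add: tau_of_compact tau_of_OX tau_inf_Un_open)
  next
    case 2
    then show ?thesis using A O disj by (simp add: tau_of_compact tau_of_OX tau_sup_Un_compact)
  qed
qed

lemma tau_of_Un:
  assumes A: "A \<in> AX" and A': "A' \<in> AX" and disj: "A \<inter> A' = {}" and Un: "A \<union> A' \<in> AX"
  shows "tau_of \<zeta> (A \<union> A') = tau_of \<zeta> A + tau_of \<zeta> A'"
proof -
  consider "compact A" | "compact A'" | "A \<in> OX" "A' \<in> OX" using A A' unfolding AX_def by blast
  then show ?thesis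
  proof cases
    case 1
    then show ?thesis using tau_of_Un_compact A' disj Un by blast
  next
    case 2
    then show ?thesis using tau_of_Un_compact[OF 2 A] disj Un by (simp add: Un_commute Int_commute)
  next
    case 3
    then have "A \<union> A' \<in> OX" by (auto simp: OX_def closure_Un)
    then show ?thesis using 3 disj by (simp add: tau_of_OX tau_sup_Un_disjoint OX_def)
  qed
qed

lemma tau_of_mono:
  assumes A: "A \<in> AX" and A': "A' \<in> AX" and sub: "A \<subseteq> A'"
  shows "tau_of \<zeta> A \<le> tau_of \<zeta> A'"
proof -
  consider "compact A" "compact A'" | "compact A" "A' \<in> OX" | "A \<in> OX" "compact A'"
    | "A \<in> OX" "A' \<in> OX"
    using A A' unfolding AX_def by blast
  then show ?thesis
  proof cases
    case 1 then show ?thesis using sub by (simp add: tau_of_compact tau_inf_mono)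
  next
    case 2 then show ?thesis using sub by (simp add: tau_of_compact tau_of_OX tau_inf_le_tau_sup)
  next
    case 3 then show ?thesis using sub by (simp add: tau_of_compact tau_of_OX tau_sup_le_tau_inf)
  next
    case 4 then show ?thesis using sub by (simp add: tau_of_OX tau_sup_mono)
  qed
qed

lemma tau_of_outer_regular:
  assumes "compact K"
  shows "tau_of \<zeta> K = Inf {tau_of \<zeta> U | U. U \<in> OX \<and> K \<subseteq> U}"
proof -
  have "{tau_of \<zeta> U | U. U \<in> OX \<and> K \<subseteq> U} = {tau_sup \<zeta> U | U. U \<in> OX \<and> K \<subseteq> U}"
    by (auto simp: tau_of_OX) (metis tau_of_OX)
  then show ?thesis using tau_inf_outer_regular[OF assms] by (simp add: tau_of_compact[OF assms])
qed

lemma tau_of_inner_regular: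
  assumes "U \<in> OX"
  shows "tau_of \<zeta> U = Sup {tau_of \<zeta> K | K. compact K \<and> K \<subseteq> U}"
proof -
  have "{tau_of \<zeta> K | K. compact K \<and> K \<subseteq> U} = {tau_inf \<zeta> K | K. compact K \<and> K \<subseteq> U}"
    by (auto simp: tau_of_compact) (metis tau_of_compact)
  then show ?thesis using tau_sup_inner_regular[OF assms] by (simp add: tau_of_OX[OF assms])
qed

end

theorem proposition2p4:
  fixes \<zeta> :: "('a::t2_space \<Rightarrow> real) \<Rightarrow> real"
  assumes "locally_compact_space (euclidean :: 'a topology)"
    and "quasi_integral \<zeta>"
  shows "topological_measure (tau_of \<zeta>)"
proof -
  interpret quasi_integral_lch \<zeta>
    using assms by unfold_locales
  show ?thesis
    unfolding topological_measure_def
    by (intro conjI ballI allI impI; (assumption | rule tau_of_nonneg tau_of_Un tau_of_mono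
          tau_of_outer_regular tau_of_inner_regular)+)
qed

end
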